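(* Let $G$ be a quadrangulation, let $v$ be a vertex of $G$, and let $i$ be an integer with $1 \leq i \leq e(v)-1$, where $e(v)=\max_{u\in V(G)} d_G(v,u)$ is the eccentricity of $v$. Then for every active vertex $w \in N_i(v)$ there exists another active vertex $w' \in N_i(v)$, $w'\neq w$, such that $w$ and $w'$ lie on a common face of $G$.
   Context: A quadrangulation is a maximal bipartite planar graph, considered with a plane embedding; equivalently, a simple connected plane bipartite graph in which every face is bounded by a cycle of length $4$. For a vertex $v$ and an integer $i\ge 0$, $N_i(v)$ denotes the set of vertices at distance exactly $i$ from $v$. Given the fixed vertex $v$, a vertex in $N_i(v)$ is called active if it has a neighbour in $N_{i+1}(v)$. *)

theory Defs
  imports Main "HOL-Combinatorics.Permutations"
begin

definition simple_graph :: "'v set \<Rightarrow> ('v \<Rightarrow> 'v \<Rightarrow> bool) \<Rightarrow> bool" where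
  "simple_graph V E \<longleftrightarrow> finite V \<and> (\<forall>u w. E u w \<longrightarrow> u \<in> V \<and> w \<in> V \<and> u \<noteq> w \<and> E w u)"

definition connected_graph :: "'v set \<Rightarrow> ('v \<Rightarrow> 'v \<Rightarrow> bool) \<Rightarrow> bool" where
  "connected_graph V E \<longleftrightarrow> (\<forall>u\<in>V. \<forall>w\<in>V. \<exists>n. (E ^^ n) u w)"

definition bipartite_graph :: "'v set \<Rightarrow> ('v \<Rightarrow> 'v \<Rightarrow> bool) \<Rightarrow> bool" where
  "bipartite_graph V E \<longleftrightarrow> (\<exists>A. A \<subseteq> V \<and> (\<forall>u w. E u w \<longrightarrow> (u \<in> A \<longleftrightarrow> w \<notin> A)))"

definition gdist :: "('v \<Rightarrow> 'v \<Rightarrow> bool) \<Rightarrow> 'v \<Rightarrow> 'v \<Rightarrow> nat" where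
  "gdist E u w = (LEAST n. (E ^^ n) u w)"

definition ecc :: "'v set \<Rightarrow> ('v \<Rightarrow> 'v \<Rightarrow> bool) \<Rightarrow> 'v \<Rightarrow> nat" where
  "ecc V E v = Max (gdist E v ` V)"

definition layer :: "'v set \<Rightarrow> ('v \<Rightarrow> 'v \<Rightarrow> bool) \<Rightarrow> 'v \<Rightarrow> nat \<Rightarrow> 'v set" where
  "layer V E v i = {u \<in> V. gdist E v u = i}"

definition active :: "'v set \<Rightarrow> ('v \<Rightarrow> 'v \<Rightarrow> bool) \<Rightarrow> 'v \<Rightarrow> nat \<Rightarrow> 'v \<Rightarrow> bool" where
  "active V E v i w \<longleftrightarrow> w \<in> layer V E v i \<and> (\<exists>x. E w x \<and> x \<in> layer V E v (Suc i))"

text \<open>Combinatorial plane embeddings via rotation systems.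
  rot u is a cyclic permutation of the neighbours of u (the clockwise order around u).\<close>
definition rotation_system :: "'v set \<Rightarrow> ('v \<Rightarrow> 'v \<Rightarrow> bool) \<Rightarrow> ('v \<Rightarrow> 'v \<Rightarrow> 'v) \<Rightarrow> bool" where
  "rotation_system V E rot \<longleftrightarrow>
     (\<forall>u\<in>V. rot u permutes {w. E u w} \<and>
            (\<forall>w w'. E u w \<longrightarrow> E u w' \<longrightarrow> (\<exists>k. (rot u ^^ k) w = w')))"

definition darts :: "('v \<Rightarrow> 'v \<Rightarrow> bool) \<Rightarrow> ('v \<times> 'v) set" where
  "darts E = {(u, w). E u w}"

definition face_step :: "('v \<Rightarrow> 'v \<Rightarrow> 'v) \<Rightarrow> 'v \<times> 'v \<Rightarrow> 'v \<times> 'v" where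
  "face_step rot d = (snd d, rot (snd d) (fst d))"

definition face_of :: "('v \<Rightarrow> 'v \<Rightarrow> 'v) \<Rightarrow> 'v \<times> 'v \<Rightarrow> ('v \<times> 'v) set" where
  "face_of rot d = {(face_step rot ^^ k) d | k. True}"

definition faces :: "('v \<Rightarrow> 'v \<Rightarrow> bool) \<Rightarrow> ('v \<Rightarrow> 'v \<Rightarrow> 'v) \<Rightarrow> ('v \<times> 'v) set set" where
  "faces E rot = face_of rot ` darts E"

definition face_vertices :: "('v \<times> 'v) set \<Rightarrow> 'v set" where
  "face_vertices f = fst ` f"

text \<open>Plane (genus 0) embedding of a connected graph: Euler's formula V - E + F = 2.\<close>
definition plane_graph :: "'v set \<Rightarrow> ('v \<Rightarrow> 'v \<Rightarrow> bool) \<Rightarrow> ('v \<Rightarrow> 'v \<Rightarrow> 'v) \<Rightarrow> bool" where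
  "plane_graph V E rot \<longleftrightarrow> simple_graph V E \<and> connected_graph V E \<and> V \<noteq> {} \<and>
     rotation_system V E rot \<and>
     int (card V) - int (card (darts E) div 2) + int (card (faces E rot)) = 2"

definition quadrangulation :: "'v set \<Rightarrow> ('v \<Rightarrow> 'v \<Rightarrow> bool) \<Rightarrow> ('v \<Rightarrow> 'v \<Rightarrow> 'v) \<Rightarrow> bool" where
  "quadrangulation V E rot \<longleftrightarrow> plane_graph V E rot \<and> bipartite_graph V E \<and>
     (\<forall>f\<in>faces E rot. card f = 4 \<and> card (face_vertices f) = 4)"

end

theory Submission
  imports Defs
begin

text \<open>Let \<open>x\<close> be a neighbour of \<open>w\<close> in \<open>N\<^sub>i\<^sub>+\<^sub>1(v)\<close> and \<open>y\<close> one in \<open>N\<^sub>i\<^sub>-\<^sub>1(v)\<close>.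
  Turning around \<open>w\<close> from \<open>x\<close> towards \<open>y\<close>, we find consecutive neighbours \<open>a, b\<close> of \<open>w\<close>
  with \<open>a \<in> N\<^sub>i\<^sub>+\<^sub>1(v)\<close> and \<open>b \<notin> N\<^sub>i\<^sub>+\<^sub>1(v)\<close>, hence \<open>d(v,b) \<le> i\<close>. The face \<open>a w b c\<close> between
  them is a 4-cycle, so its fourth vertex \<open>c \<noteq> w\<close> is adjacent to both \<open>a\<close> and \<open>b\<close>. Thus
  \<open>i \<le> d(v,c) \<le> i + 1\<close>, and bipartiteness rules out \<open>d(v,c) = i + 1\<close>, so \<open>c\<close> is an active vertex
  of \<open>N\<^sub>i(v)\<close>, witnessed by \<open>a\<close>.\<close>

lemma relpowp_bipartite_parity:
  assumes "\<forall>u w. E u w \<longrightarrow> (u \<in> A \<longleftrightarrow> w \<notin> A)" and "(E ^^ n) u x"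
  shows "x \<in> A \<longleftrightarrow> (u \<in> A \<longleftrightarrow> even n)"
  using assms(2)
proof (induction n arbitrary: x)
  case (Suc n)
  then obtain y where "(E ^^ n) u y" "E y x" by (auto elim: relpowp_Suc_E)
  with Suc.IH assms(1) show ?case by auto
qed simp

lemma simple_graph_edgeD:
  assumes "simple_graph V E" "E x y"
  shows "x \<in> V" "y \<in> V" "E y x"
  using assms unfolding simple_graph_def by blast+

lemma gdist_le: "(E ^^ n) u x \<Longrightarrow> gdist E u x \<le> n"
  unfolding gdist_def by (rule Least_le)

lemma relpowp_gdist:
  assumes "connected_graph V E" "u \<in> V" "x \<in> V"
  shows "(E ^^ gdist E u x) u x"
proof -
  from assms obtain n where "(E ^^ n) u x" unfolding connected_graph_def by blast
  then show ?thesis unfolding gdist_def by (rule LeastI)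
qed

lemma gdist_edge_le:
  assumes "simple_graph V E" "connected_graph V E" "u \<in> V" "E x y"
  shows "gdist E u y \<le> Suc (gdist E u x)"
proof -
  have "(E ^^ gdist E u x) u x"
    using relpowp_gdist[OF assms(2,3) simple_graph_edgeD(1)[OF assms(1,4)]] .
  from relpowp_Suc_I[OF this assms(4)] show ?thesis by (rule gdist_le)
qed

lemma gdist_edge_neq:
  assumes "simple_graph V E" "connected_graph V E" "bipartite_graph V E" "u \<in> V" "E x y"
  shows "gdist E u x \<noteq> gdist E u y"
proof -
  obtain A where A: "\<forall>u w. E u w \<longrightarrow> (u \<in> A \<longleftrightarrow> w \<notin> A)"
    using assms(3) unfolding bipartite_graph_def by blast
  note simple_graph_edgeD[OF assms(1,5)]
  have "x \<in> A \<longleftrightarrow> (u \<in> A \<longleftrightarrow> even (gdist E u x))"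
    by (rule relpowp_bipartite_parity[OF A relpowp_gdist[OF assms(2,4) \<open>x \<in> V\<close>]])
  moreover have "y \<in> A \<longleftrightarrow> (u \<in> A \<longleftrightarrow> even (gdist E u y))"
    by (rule relpowp_bipartite_parity[OF A relpowp_gdist[OF assms(2,4) \<open>y \<in> V\<close>]])
  moreover have "x \<in> A \<longleftrightarrow> y \<notin> A" using A assms(5) by blast
  ultimately show ?thesis by auto
qed

lemma gdist_Suc_predecessor:
  assumes "simple_graph V E" "connected_graph V E" "u \<in> V" "w \<in> V" "gdist E u w = Suc j"
  obtains y where "E w y" "gdist E u y \<le> j"
proof -
  have "(E ^^ Suc j) u w" using relpowp_gdist[OF assms(2-4)] assms(5) by simp
  then obtain y where "(E ^^ j) u y" "E y w" by (auto elim: relpowp_Suc_E)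
  moreover note simple_graph_edgeD(3)[OF assms(1) \<open>E y w\<close>]
  ultimately show ?thesis by (blast intro: that gdist_le)
qed

lemma rotation_system_neighbour:
  assumes "rotation_system V E rot" "u \<in> V" "E u z"
  shows "E u (rot u z)"
proof -
  have "rot u permutes {z. E u z}" using assms(1,2) unfolding rotation_system_def by blast
  from permutes_in_image[OF this] assms(3) show ?thesis by simp
qed

lemma rotation_system_change:
  assumes "rotation_system V E rot" "w \<in> V" "E w x" "E w y" "P x" "\<not> P y"
  obtains a where "E w a" "P a" "\<not> P (rot w a)"
proof -
  have iter_nb: "E w ((rot w ^^ n) x)" for n
    by (induction n) (simp_all add: assms(3) rotation_system_neighbour[OF assms(1,2)])
  obtain k where "(rot w ^^ k) x = y"
    using assms(1-4) unfolding rotation_system_def by blast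
  then have "\<exists>n. \<not> P ((rot w ^^ n) x)" using assms(6) by blast
  define k0 where "k0 = (LEAST n. \<not> P ((rot w ^^ n) x))"
  have "\<not> P ((rot w ^^ k0) x)"
    unfolding k0_def by (rule LeastI_ex) fact
  moreover have "k0 \<noteq> 0"
  proof
    assume "k0 = 0"
    with calculation assms(5) show False by simp
  qed
  then obtain k1 where k1: "k0 = Suc k1" using not0_implies_Suc by blast
  moreover have "P ((rot w ^^ k1) x)"
    using k1 not_less_Least[of k1 "\<lambda>n. \<not> P ((rot w ^^ n) x)"] by (simp add: k0_def)
  ultimately show ?thesis using that[OF iter_nb[of k1]] by simp
qed

lemma funpow_cancel_inj_on:
  assumes "inj_on s D" "\<And>n. (s ^^ n) d \<in> D" "(s ^^ (j + m)) d = (s ^^ j) d"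
  shows "(s ^^ m) d = d"
  using assms(3)
proof (induction j)
  case (Suc j)
  have "s ((s ^^ (j + m)) d) = s ((s ^^ j) d)"
    using Suc.prems by (simp add: funpow_swap1)
  with assms(1,2) have "(s ^^ (j + m)) d = (s ^^ j) d" by (auto dest: inj_onD)
  then show ?case by (rule Suc.IH)
qed simp

lemma range_funpow_periodic:
  assumes "(s ^^ m) d = d" "0 < m"
  shows "range (\<lambda>k. (s ^^ k) d) = (\<lambda>k. (s ^^ k) d) ` {..<m}"
proof -
  have "(s ^^ k) d = (s ^^ (k mod m)) d" for k
    using funpow_mod_eq[OF assms(1)] by simp
  with assms(2) show ?thesis by (auto intro: rev_image_eqI[of "_ mod m"])
qed

lemma funpow_card_orbit:
  assumes "inj_on s D" "\<And>k. (s ^^ k) d \<in> D" "card (range (\<lambda>k. (s ^^ k) d)) = n" "0 < n"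
  shows "(s ^^ n) d = d"
proof -
  define g where "g = (\<lambda>k. (s ^^ k) d)"
  have "finite (range g)"
    using assms(3,4) card.infinite[of "range g"] by (auto simp: g_def)
  then have "card (g ` {..n}) \<le> n"
    using card_mono[of "range g" "g ` {..n}"] assms(3) by (simp add: g_def image_mono)
  then have "\<not> inj_on g {..n}"
    using card_image[of g "{..n}"] by auto
  then obtain j' k' where "j' \<le> n" "k' \<le> n" "j' \<noteq> k'" "g j' = g k'"
    unfolding inj_on_def by auto
  then obtain j k where jk: "j < k" "k \<le> n" "g j = g k"
    by (cases "j' < k'") (auto simp: not_less_iff_gr_or_eq)
  define m where "m = k - j"
  have "(s ^^ (j + m)) d = (s ^^ j) d" using jk by (simp add: g_def m_def)
  then have period: "(s ^^ m) d = d" by (rule funpow_cancel_inj_on[OF assms(1,2)])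
  have "0 < m" using jk by (simp add: m_def)
  then have "n \<le> m"
    using assms(3) card_image_le[of "{..<m}" g] range_funpow_periodic[OF period]
    by (simp add: g_def)
  with jk have "m = n" by (simp add: m_def)
  with period show ?thesis by simp
qed

lemma face_step_in_darts:
  assumes "simple_graph V E" "rotation_system V E rot" "p \<in> darts E"
  shows "face_step rot p \<in> darts E"
proof -
  obtain u x where p: "p = (u, x)" "E u x" using assms(3) by (auto simp: darts_def)
  then have "E x (rot x u)"
    using rotation_system_neighbour[OF assms(2)] simple_graph_edgeD[OF assms(1)] by blast
  then show ?thesis by (simp add: p face_step_def darts_def)
qed

lemma inj_on_face_step:
  assumes "simple_graph V E" "rotation_system V E rot"
  shows "inj_on (face_step rot) (darts E)"
proof (rule inj_onI, clarify)
  fix p1 p2 q1 q2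
  assume "(p1, p2) \<in> darts E" and "face_step rot (p1, p2) = face_step rot (q1, q2)"
  then have "p2 \<in> V" "q2 = p2" "rot p2 p1 = rot p2 q1"
    using assms(1) unfolding simple_graph_def darts_def face_step_def by auto
  with assms(2) show "p1 = q1 \<and> p2 = q2"
    unfolding rotation_system_def by (metis permutes_inj injD)
qed

lemma quadrangulation_face_cycle:
  assumes "quadrangulation V E rot" "E a w"
  defines "b \<equiv> rot w a" and "c \<equiv> rot (rot w a) w"
  shows "E b c" "E c a" "c \<noteq> w" "face_of rot (a, w) \<in> faces E rot"
    and "face_vertices (face_of rot (a, w)) = {a, w, b, c}"
proof -
  define s where "s = face_step rot"
  have sg: "simple_graph V E" and rs: "rotation_system V E rot"
    using assms(1) unfolding quadrangulation_def plane_graph_def by auto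
  have d0: "(a, w) \<in> darts E" using assms(2) by (simp add: darts_def)
  have in_darts: "(s ^^ n) (a, w) \<in> darts E" for n
    by (induction n) (simp_all add: d0 s_def face_step_in_darts[OF sg rs])
  show face: "face_of rot (a, w) \<in> faces E rot"
    using d0 by (simp add: faces_def)
  have orbit: "face_of rot (a, w) = range (\<lambda>k. (s ^^ k) (a, w))"
    by (auto simp: face_of_def s_def)
  have "card (face_of rot (a, w)) = 4" and card_fv: "card (face_vertices (face_of rot (a, w))) = 4"
    using assms(1) face unfolding quadrangulation_def by auto
  then have period: "(s ^^ 4) (a, w) = (a, w)"
    using funpow_card_orbit[OF inj_on_face_step[OF sg rs] in_darts[unfolded s_def]] orbit unfolding s_def by simp
  have steps: "(s ^^ 1) (a, w) = (w, b)" "(s ^^ 2) (a, w) = (b, c)"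
    "(s ^^ 3) (a, w) = (c, rot c b)" "(s ^^ 4) (a, w) = (rot c b, rot (rot c b) c)"
    by (simp_all add: s_def face_step_def b_def c_def numeral_eq_Suc)
  then have "rot c b = a" using period by simp
  have "{..<4::nat} = {0, 1, 2, 3}" by auto
  then have "face_of rot (a, w) = {(a, w), (w, b), (b, c), (c, a)}"
    using orbit range_funpow_periodic[OF period] steps \<open>rot c b = a\<close> by simp
  then show fv: "face_vertices (face_of rot (a, w)) = {a, w, b, c}"
    by (auto simp: face_vertices_def)
  show "E b c" "E c a"
    using in_darts[of 2] in_darts[of 3] steps \<open>rot c b = a\<close> by (simp_all add: darts_def)
  show "c \<noteq> w"
  proof
    assume "c = w"
    then have "card (face_vertices (face_of rot (a, w))) \<le> 3"
      using fv by (simp add: card_insert_if)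
    with card_fv show False by simp
  qed
qed

lemma quadrangulation_active_on_face:
  assumes "quadrangulation V E rot" "v \<in> V" "E w a"
    and "gdist E v a = Suc i" "gdist E v (rot w a) \<le> i"
  obtains c f where "active V E v i c" "c \<noteq> w" "f \<in> faces E rot"
    "w \<in> face_vertices f" "c \<in> face_vertices f"
proof -
  let ?d = "gdist E v"
  have sg: "simple_graph V E" and cg: "connected_graph V E" and bg: "bipartite_graph V E"
    using assms(1) unfolding quadrangulation_def plane_graph_def by auto
  define b c where "b = rot w a" and "c = rot b w"
  note face = quadrangulation_face_cycle[OF assms(1) simple_graph_edgeD(3)[OF sg assms(3)],
      folded b_def c_def]
  note dist_edge = gdist_edge_le[OF sg cg assms(2)]
  have "?d c \<le> Suc i"
    using dist_edge[OF face(1)] assms(5) b_def by simp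
  moreover have "i \<le> ?d c"
    using dist_edge[OF face(2)] assms(4) by simp
  moreover have "?d c \<noteq> Suc i"
    using gdist_edge_neq[OF sg cg bg assms(2) face(2)] assms(4) by simp
  ultimately have "c \<in> layer V E v i"
    using simple_graph_edgeD(1)[OF sg face(2)] by (simp add: layer_def)
  moreover have "a \<in> layer V E v (Suc i)"
    using simple_graph_edgeD(2)[OF sg face(2)] assms(4) by (simp add: layer_def)
  ultimately have "active V E v i c"
    using face(2) unfolding active_def by blast
  with face(3-5) show ?thesis by (intro that) auto
qed

theorem lemma2p4:
  fixes V :: "'v set" and E :: "'v \<Rightarrow> 'v \<Rightarrow> bool" and rot :: "'v \<Rightarrow> 'v \<Rightarrow> 'v"
    and v w :: 'v and i :: nat
  assumes "quadrangulation V E rot"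
    and "v \<in> V"
    and "1 \<le> i" and "i \<le> ecc V E v - 1"
    and "active V E v i w"
  shows "\<exists>w'. active V E v i w' \<and> w' \<noteq> w \<and>
           (\<exists>f\<in>faces E rot. w \<in> face_vertices f \<and> w' \<in> face_vertices f)"
proof -
  let ?d = "gdist E v"
  have sg: "simple_graph V E" and cg: "connected_graph V E" and rs: "rotation_system V E rot"
    using assms(1) unfolding quadrangulation_def plane_graph_def by auto
  obtain x where "w \<in> V" "?d w = i" "E w x" "?d x = Suc i"
    using assms(5) unfolding active_def layer_def by blast
  have "?d w = Suc (i - 1)" using \<open>?d w = i\<close> assms(3) by simp
  then obtain y where "E w y" "?d y \<le> i - 1"
    by (rule gdist_Suc_predecessor[OF sg cg assms(2) \<open>w \<in> V\<close>])
  then have "?d y \<noteq> Suc i" by simp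
  with \<open>?d x = Suc i\<close> obtain a where "E w a" "?d a = Suc i" "?d (rot w a) \<noteq> Suc i"
    by (rule rotation_system_change[OF rs \<open>w \<in> V\<close> \<open>E w x\<close> \<open>E w y\<close>, where P = "\<lambda>z. ?d z = Suc i"])
  moreover have "?d (rot w a) \<le> Suc i"
    using gdist_edge_le[OF sg cg assms(2) rotation_system_neighbour[OF rs \<open>w \<in> V\<close> \<open>E w a\<close>]]
      \<open>?d w = i\<close> by simp
  ultimately have "?d (rot w a) \<le> i" by simp
  then obtain c f where "active V E v i c" "c \<noteq> w" "f \<in> faces E rot"
    "w \<in> face_vertices f" "c \<in> face_vertices f"
    by (rule quadrangulation_active_on_face[OF assms(1,2) \<open>E w a\<close> \<open>?d a = Suc i\<close>])
  then show ?thesis by blast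
qed

end
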